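(* Let $(X,\langle\cdot,\cdot\rangle)$ be a real Hilbert space, let $z\in X$ with $z\neq 0$, and let $T:X\to X$ be a continuous linear operator which is compact and symmetric. For each $\lambda>\|T\|$, let $\hat v_\lambda$ denote the unique solution $x\in X$ of the equation $T(x)-\lambda x=z$ (it exists and is unique by the contraction mapping theorem, and it is nonzero). Let $V$ be the (possibly empty) set of all solutions $x\in X$ of $T(x)-\|T\|x=z$, and set $\theta=\inf_{x\in V}\|x\|^2$ (with the convention $\inf\emptyset=+\infty$). For each $r>0$ let $S_r=\{x\in X:\|x\|^2=r\}$. For $\lambda>\|T\|$ and $r>0$ set $$g(\lambda)=\|\hat v_\lambda\|^2,\qquad \gamma(r)=\sup_{x\in S_r}J(x),\quad\text{where } J(x)=\langle T(x)-2z,x\rangle .$$ Then: $(b_1)$ the function $g$ is decreasing in $]\|T\|,+\infty[$ and $g(]\|T\|,+\infty[)=]0,\theta[$; $(b_2)$ for each $r\in]0,\theta[$, the point $\hat x_r:=\hat v_{g^{-1}(r)}$ is the unique global maximum of $J|_{S_r}$, and every maximizing sequence for $J|_{S_r}$ converges (in norm) to $\hat x_r$; $(b_3)$ the function $r\mapsto \hat x_r$ is continuous in $]0,\theta[$; $(b_4)$ the function $\gamma$ is $C^1$, increasing and strictly concave in $]0,\theta[$; $(b_5)$ $T(\hat x_r)-\gamma'(r)\hat x_r=z$ for all $r\in]0,\theta[$; $(b_6)$ $\gamma'(r)=g^{-1}(r)$ for all $r\in]0,\theta[$.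
   Context: A linear operator $T$ is compact if for each bounded $A\subset X$ the closure $\overline{T(A)}$ is compact; it is symmetric if $\langle T(x),u\rangle=\langle T(u),x\rangle$ for all $x,u\in X$. $\|T\|$ denotes the operator norm. Note $\theta$ may equal $+\infty$, in which case $]0,\theta[=]0,+\infty[$. *)

theory Defs
  imports "HOL-Analysis.Analysis"
begin

definition compact_operator :: "('a::real_normed_vector \<Rightarrow> 'b::real_normed_vector) \<Rightarrow> bool" where
  "compact_operator T \<longleftrightarrow> (\<forall>A. bounded A \<longrightarrow> compact (closure (T ` A)))"

definition symmetric_operator :: "('a::real_inner \<Rightarrow> 'a) \<Rightarrow> bool" where
  "symmetric_operator T \<longleftrightarrow> (\<forall>x u. inner (T x) u = inner (T u) x)"

definition strictly_concave_on :: "real set \<Rightarrow> (real \<Rightarrow> real) \<Rightarrow> bool" where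
  "strictly_concave_on I f \<longleftrightarrow>
     (\<forall>x\<in>I. \<forall>y\<in>I. \<forall>t. x \<noteq> y \<and> 0 < t \<and> t < 1 \<longrightarrow>
        f ((1 - t) * x + t * y) > (1 - t) * f x + t * f y)"

end

theory Submission
  imports Defs
begin

text \<open>For \<open>\<lambda> > \<parallel>T\<parallel>\<close> the solution \<open>v\<close> of \<open>T v - \<lambda> v = z\<close> satisfies, by symmetry of \<open>T\<close>,
  \<open>J x - \<lambda> \<parallel>x\<parallel>\<^sup>2 \<le> J v - \<lambda> \<parallel>v\<parallel>\<^sup>2 - (\<lambda> - \<parallel>T\<parallel>) \<parallel>x - v\<parallel>\<^sup>2\<close> for all \<open>x\<close>.
  On the sphere \<open>\<parallel>x\<parallel>\<^sup>2 = g \<lambda>\<close> this makes \<open>v\<close> the unique maximizer of \<open>J\<close>, with a quadratic gap that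
  forces maximizing sequences to converge. Comparing two values of \<open>\<lambda>\<close> shows that \<open>g\<close> is strictly
  decreasing and that \<open>g\<^sup>-\<^sup>1 r\<close> is a supergradient of \<open>\<gamma>\<close> at \<open>r\<close>, strictly away from \<open>r\<close>; with the
  continuity of \<open>g\<^sup>-\<^sup>1\<close> this yields \<open>\<gamma>' = g\<^sup>-\<^sup>1\<close>, monotonicity and strict concavity. Compactness of \<open>T\<close>
  is needed only to identify the range \<open>]0, sup g[\<close> of \<open>g\<close> with \<open>]0, \<theta>[\<close>.\<close>

lemma inner_le_onorm_mult_norm_square:
  fixes T :: "'a::real_inner \<Rightarrow> 'a"
  assumes "bounded_linear T"
  shows "inner (T x) x \<le> onorm T * (norm x)\<^sup>2"
proof -
  have "inner (T x) x \<le> norm (T x) * norm x" by (rule norm_cauchy_schwarz)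
  also have "\<dots> \<le> onorm T * norm x * norm x" using onorm[OF assms] by (simp add: mult_right_mono)
  finally show ?thesis by (simp add: power2_eq_square mult.assoc)
qed

lemma resolvent_norm_bound:
  fixes T :: "'a::real_normed_vector \<Rightarrow> 'a"
  assumes "bounded_linear T" "onorm T < l" "T x - l *\<^sub>R x = w"
  shows "(l - onorm T) * norm x \<le> norm w"
proof -
  have "0 < l" using onorm_pos_le[OF assms(1)] assms(2) by linarith
  have "T x - w = l *\<^sub>R x" using assms(3) by (simp add: algebra_simps)
  then have "l * norm x = norm (T x - w)" using \<open>0 < l\<close> by simp
  also have "\<dots> \<le> onorm T * norm x + norm w" using onorm[OF assms(1), of x] norm_triangle_ineq4[of "T x" w] by linarith
  finally show ?thesis by (simp add: algebra_simps)
qed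

lemma ex1_resolvent_solution:
  fixes T :: "'a::{real_normed_vector, complete_space} \<Rightarrow> 'a"
  assumes T: "bounded_linear T" and l: "onorm T < l"
  shows "\<exists>!x. T x - l *\<^sub>R x = w"
proof -
  have l0: "0 < l" using onorm_pos_le[OF T] l by linarith
  define f where "f x = (1 / l) *\<^sub>R (T x - w)" for x
  have "\<exists>!x. f x = x"
  proof (rule banach_fix_type)
    show "0 \<le> onorm T / l" "onorm T / l < 1" using onorm_pos_le[OF T] l l0 by simp_all
    show "\<forall>x y. dist (f x) (f y) \<le> onorm T / l * dist x y"
    proof (intro allI)
      fix x y
      have "dist (f x) (f y) = norm (T (x - y)) / l"
        using l0 by (simp add: f_def dist_norm linear_diff[OF bounded_linear.linear[OF T]] flip: scaleR_diff_right)
      also have "\<dots> \<le> onorm T * norm (x - y) / l" using onorm[OF T] l0 by (simp add: divide_right_mono)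
      finally show "dist (f x) (f y) \<le> onorm T / l * dist x y" by (simp add: dist_norm)
    qed
  qed
  moreover have "f x = x \<longleftrightarrow> T x - l *\<^sub>R x = w" for x
  proof -
    have "f x = x \<longleftrightarrow> l *\<^sub>R f x = l *\<^sub>R x" using l0 by simp
    also have "l *\<^sub>R f x = T x - w" using l0 by (simp add: f_def)
    finally show ?thesis by (auto simp: algebra_simps)
  qed
  ultimately show ?thesis by simp
qed

lemma compact_operator_convergent_subseq:
  fixes T :: "'a::real_normed_vector \<Rightarrow> 'b::real_normed_vector" and v :: "nat \<Rightarrow> 'a"
  assumes "compact_operator T" "bounded (range v)"
  obtains w \<sigma> where "strict_mono \<sigma>" "(\<lambda>n. T (v (\<sigma> n))) \<longlonglongrightarrow> w"
proof -
  have "seq_compact (closure (T ` range v))"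
    using assms unfolding compact_operator_def by (simp add: compact_imp_seq_compact)
  moreover have "\<forall>n. T (v n) \<in> closure (T ` range v)"
    by (auto intro: closure_subset[THEN subsetD])
  ultimately obtain w \<sigma> where "w \<in> closure (T ` range v)" "strict_mono \<sigma>"
    and "((\<lambda>n. T (v n)) \<circ> \<sigma>) \<longlonglongrightarrow> w"
    by (rule seq_compactE)
  then show thesis using that by (simp add: comp_def)
qed

locale resolvent_family =
  fixes T :: "'a::{real_inner, complete_space} \<Rightarrow> 'a" and z :: 'a
  assumes z_nonzero: "z \<noteq> 0"
    and bounded_linear: "bounded_linear T"
    and symmetric: "symmetric_operator T"
begin

definition sol :: "real \<Rightarrow> 'a" where "sol l = (THE x. T x - l *\<^sub>R x = z)"
definition sol_sqnorm :: "real \<Rightarrow> real" where "sol_sqnorm l = (norm (sol l))\<^sup>2"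
definition energy :: "'a \<Rightarrow> real" where "energy x = inner (T x - 2 *\<^sub>R z) x"

lemma onorm_nonneg: "0 \<le> onorm T"
  using onorm_pos_le[OF bounded_linear] .

lemma T_diff: "T (x - y) = T x - T y"
  using bounded_linear by (simp add: linear_simps)

lemma sol_eq: "onorm T < l \<Longrightarrow> T (sol l) - l *\<^sub>R sol l = z"
  unfolding sol_def by (rule theI'[OF ex1_resolvent_solution[OF bounded_linear]])

lemma solution_nonzero: "T x - l *\<^sub>R x = z \<Longrightarrow> x \<noteq> 0"
  using z_nonzero bounded_linear by (auto simp: linear_simps)

lemma sol_nonzero: "onorm T < l \<Longrightarrow> sol l \<noteq> 0"
  using solution_nonzero sol_eq by blast

lemma sol_sqnorm_pos: "onorm T < l \<Longrightarrow> 0 < sol_sqnorm l"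
  unfolding sol_sqnorm_def using sol_nonzero by simp

lemma energy_gap:
  assumes "T v - l *\<^sub>R v = z"
  shows "energy x - l * (norm x)\<^sup>2 \<le> energy v - l * (norm v)\<^sup>2 - (l - onorm T) * (norm (x - v))\<^sup>2"
proof -
  have "inner (T v) x = inner (T x) v"
    using symmetric unfolding symmetric_operator_def by blast
  \<comment> \<open>exact second-order expansion around the critical point \<open>v\<close>\<close>
  then have "energy x - l * (norm x)\<^sup>2
      = energy v - l * (norm v)\<^sup>2 + (inner (T (x - v)) (x - v) - l * (norm (x - v))\<^sup>2)"
    unfolding energy_def unfolding assms[symmetric]
    by (simp add: T_diff power2_norm_eq_inner inner_diff_left inner_diff_right inner_commute[of v x] algebra_simps)
  then show ?thesis
    using inner_le_onorm_mult_norm_square[OF bounded_linear, of "x - v"] by (simp add: algebra_simps)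
qed

lemma energy_gap_strict:
  assumes "T v - l *\<^sub>R v = z" "onorm T < l" "x \<noteq> v"
  shows "energy x - l * (norm x)\<^sup>2 < energy v - l * (norm v)\<^sup>2"
proof -
  have "0 < (l - onorm T) * (norm (x - v))\<^sup>2" using assms(2,3) by simp
  then show ?thesis using energy_gap[OF assms(1), of x] by linarith
qed

lemma sol_neq: assumes "onorm T < a" "a < b" shows "sol a \<noteq> sol b"
proof
  assume "sol a = sol b"
  then have "(b - a) *\<^sub>R sol a = 0"
    using sol_eq[of a] sol_eq[of b] assms by (simp add: algebra_simps)
  then show False using assms sol_nonzero[of a] by simp
qed

lemma sol_sqnorm_decreasing:
  assumes "onorm T < a" "a < b"
  shows "sol_sqnorm b < sol_sqnorm a"
proof -
  have b: "onorm T < b" using assms by linarith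
  have "energy (sol b) - a * sol_sqnorm b < energy (sol a) - a * sol_sqnorm a"
    unfolding sol_sqnorm_def using energy_gap_strict[OF sol_eq[OF assms(1)] assms(1)] sol_neq[OF assms] by simp
  moreover have "energy (sol a) - b * sol_sqnorm a \<le> energy (sol b) - b * sol_sqnorm b"
  proof -
    have "0 \<le> (b - onorm T) * (norm (sol a - sol b))\<^sup>2" using b by simp
    then show ?thesis unfolding sol_sqnorm_def using energy_gap[OF sol_eq[OF b], of "sol a"] by linarith
  qed
  ultimately have "(b - a) * sol_sqnorm b < (b - a) * sol_sqnorm a"
    by (simp add: algebra_simps)
  then show ?thesis using assms by simp
qed

lemma inj_on_sol_sqnorm: "inj_on sol_sqnorm {onorm T<..}"
proof (rule linorder_inj_onI')
  fix a b assume "a \<in> {onorm T<..}" "a < b"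
  then show "sol_sqnorm a \<noteq> sol_sqnorm b" using sol_sqnorm_decreasing by fastforce
qed

lemma sol_continuous: "continuous_on {onorm T<..} sol"
proof (rule continuous_at_imp_continuous_on, rule ballI)
  fix m assume "m \<in> {onorm T<..}"
  then have m: "onorm T < m" by simp
  have "((\<lambda>l. \<bar>l - m\<bar> * norm (sol m) / (l - onorm T)) \<longlongrightarrow> 0) (at m)"
    using m by (auto intro!: tendsto_eq_intros)
  moreover have "\<forall>\<^sub>F l in at m. norm (sol l - sol m) \<le> \<bar>l - m\<bar> * norm (sol m) / (l - onorm T)"
  proof -
    have "\<forall>\<^sub>F l in at m. onorm T < l"
      using eventually_at_in_open'[OF open_greaterThan, of m] m by simp
    then show ?thesis
    proof (rule eventually_mono)
      fix l assume l: "onorm T < l"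
      have "T (sol l - sol m) - l *\<^sub>R (sol l - sol m) = (l - m) *\<^sub>R sol m"
        using sol_eq[OF l] sol_eq[OF m] by (simp add: T_diff algebra_simps)
      from resolvent_norm_bound[OF bounded_linear l this] l
      have "(l - onorm T) * norm (sol l - sol m) \<le> \<bar>l - m\<bar> * norm (sol m)" by simp
      with l show "norm (sol l - sol m) \<le> \<bar>l - m\<bar> * norm (sol m) / (l - onorm T)"
        by (simp add: field_simps)
    qed
  qed
  ultimately have "((\<lambda>l. sol l - sol m) \<longlongrightarrow> 0) (at m)"
    by (rule Lim_null_comparison[rotated])
  then show "isCont sol m"
    by (simp add: isCont_def LIM_zero_iff)
qed

lemma isCont_sol_sqnorm: "onorm T < l \<Longrightarrow> isCont sol_sqnorm l"
  unfolding sol_sqnorm_def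
  using sol_continuous continuous_on_eq_continuous_at[of "{onorm T<..}" sol]
  by (auto intro!: continuous_intros)

abbreviation levels :: "real set" where "levels \<equiv> sol_sqnorm ` {onorm T<..}"

lemma connected_levels: "connected levels"
  by (rule connected_continuous_image[OF continuous_at_imp_continuous_on connected_Ioi])
    (simp add: isCont_sol_sqnorm)

lemma sol_sqnorm_small: assumes "0 < r" shows "\<exists>l>onorm T. sol_sqnorm l < r"
proof -
  define l where "l = onorm T + 2 * norm z / sqrt r"
  have gap: "l - onorm T = 2 * norm z / sqrt r" "0 < l - onorm T"
    unfolding l_def using z_nonzero assms by simp_all
  then have l: "onorm T < l" by simp
  have "norm (sol l) * (2 * norm z / sqrt r) \<le> norm z"
    using resolvent_norm_bound[OF bounded_linear l sol_eq[OF l]] gap(1) by (simp add: mult.commute)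
  then have "norm (sol l) \<le> sqrt r / 2"
    using z_nonzero assms by (simp add: field_simps)
  then have "sol_sqnorm l \<le> (sqrt r / 2)\<^sup>2"
    unfolding sol_sqnorm_def by (simp add: power_mono)
  also have "\<dots> < r" using assms by (simp add: power_divide)
  finally show ?thesis using l by blast
qed

lemma levels_eq: "levels = {r. 0 < r \<and> (\<exists>l>onorm T. r < sol_sqnorm l)}"
proof (intro equalityI subsetI)
  fix r assume "r \<in> levels"
  then obtain l where l: "onorm T < l" "r = sol_sqnorm l" by auto
  then have "onorm T < (onorm T + l) / 2" "(onorm T + l) / 2 < l" by simp_all
  then show "r \<in> {r. 0 < r \<and> (\<exists>l>onorm T. r < sol_sqnorm l)}"
    using l sol_sqnorm_pos sol_sqnorm_decreasing by blast
next
  fix r assume "r \<in> {r. 0 < r \<and> (\<exists>l>onorm T. r < sol_sqnorm l)}"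
  then obtain a where r: "0 < r" "onorm T < a" "r < sol_sqnorm a" by blast
  obtain b where b: "onorm T < b" "sol_sqnorm b < r" using sol_sqnorm_small[OF r(1)] by blast
  from connected_levels have "is_interval levels"
    by (simp add: is_interval_connected_1)
  then show "r \<in> levels"
    unfolding is_interval_1 using r b by (meson greaterThan_iff image_eqI less_imp_le)
qed

lemma open_levels: "open levels"
proof -
  have "levels = {0<..} \<inter> (\<Union>l\<in>{onorm T<..}. {..<sol_sqnorm l})"
    unfolding levels_eq by auto
  then show ?thesis by (auto intro!: open_Int open_UN)
qed

lemma convex_levels: "convex levels"
  using connected_levels is_interval_connected_1 is_interval_convex_1 by blast

definition multiplier :: "real \<Rightarrow> real" where "multiplier = inv_into {onorm T<..} sol_sqnorm"
definition maximizer :: "real \<Rightarrow> 'a" where "maximizer r = sol (multiplier r)"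
definition max_energy :: "real \<Rightarrow> real" where "max_energy r = Sup (energy ` {x. (norm x)\<^sup>2 = r})"

lemma multiplier_gt: "r \<in> levels \<Longrightarrow> onorm T < multiplier r"
  unfolding multiplier_def using inv_into_into[of r sol_sqnorm "{onorm T<..}"] by simp

lemma sol_sqnorm_multiplier: "r \<in> levels \<Longrightarrow> sol_sqnorm (multiplier r) = r"
  unfolding multiplier_def by (rule f_inv_into_f)

lemma multiplier_sol_sqnorm: "onorm T < l \<Longrightarrow> multiplier (sol_sqnorm l) = l"
  unfolding multiplier_def using inv_into_f_f[OF inj_on_sol_sqnorm] by simp

lemma multiplier_continuous: "continuous_on levels multiplier"
proof (rule continuous_at_imp_continuous_on, rule ballI)
  fix r assume "r \<in> levels"
  then obtain l where l: "onorm T < l" and r: "r = sol_sqnorm l" by blast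
  have near: "onorm T < y" if "\<bar>y - l\<bar> \<le> (l - onorm T) / 2" for y
    using abs_le_D2[OF that] l by (simp add: field_simps)
  show "isCont multiplier r"
    unfolding r
  proof (rule isCont_inverse_function[where f = sol_sqnorm and x = l and d = "(l - onorm T) / 2"])
    show "0 < (l - onorm T) / 2" using l by simp
  qed (simp_all add: near multiplier_sol_sqnorm isCont_sol_sqnorm)
qed

lemma maximizer_eq: "r \<in> levels \<Longrightarrow> T (maximizer r) - multiplier r *\<^sub>R maximizer r = z"
  unfolding maximizer_def using sol_eq[OF multiplier_gt] .

lemma sqnorm_maximizer: "r \<in> levels \<Longrightarrow> (norm (maximizer r))\<^sup>2 = r"
  using sol_sqnorm_multiplier unfolding sol_sqnorm_def maximizer_def by simp

lemma energy_le_maximizer: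
  assumes "r \<in> levels" "(norm x)\<^sup>2 = r"
  shows "energy x \<le> energy (maximizer r) - (multiplier r - onorm T) * (norm (x - maximizer r))\<^sup>2"
  using energy_gap[OF maximizer_eq[OF assms(1)], of x] sqnorm_maximizer[OF assms(1)] assms(2) by simp

lemma energy_less_maximizer:
  assumes "r \<in> levels" "(norm x)\<^sup>2 = r" "x \<noteq> maximizer r"
  shows "energy x < energy (maximizer r)"
proof -
  have "0 < (multiplier r - onorm T) * (norm (x - maximizer r))\<^sup>2"
    using multiplier_gt[OF assms(1)] assms(3) by simp
  then show ?thesis using energy_le_maximizer[OF assms(1,2)] by linarith
qed

lemma max_energy_eq:
  assumes "r \<in> levels" shows "max_energy r = energy (maximizer r)"
  unfolding max_energy_def
proof (rule cSup_eq_maximum)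
  show "energy (maximizer r) \<in> energy ` {x. (norm x)\<^sup>2 = r}"
    using sqnorm_maximizer[OF assms] by simp
next
  fix e assume "e \<in> energy ` {x. (norm x)\<^sup>2 = r}"
  then obtain x where "(norm x)\<^sup>2 = r" "e = energy x" by auto
  then show "e \<le> energy (maximizer r)"
    using energy_less_maximizer[OF assms] by (cases "x = maximizer r") (auto intro: less_imp_le)
qed

lemma maximizing_seq_tendsto:
  assumes r: "r \<in> levels" and s: "\<And>n. (norm (s n))\<^sup>2 = r"
    and lim: "(\<lambda>n. energy (s n)) \<longlonglongrightarrow> max_energy r"
  shows "s \<longlonglongrightarrow> maximizer r"
proof -
  define c where "c = multiplier r - onorm T"
  have c: "0 < c" unfolding c_def using multiplier_gt[OF r] by simp
  have "\<forall>n. norm ((norm (s n - maximizer r))\<^sup>2) \<le> (energy (maximizer r) - energy (s n)) / c"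
    using energy_le_maximizer[OF r s] c unfolding c_def by (simp add: field_simps)
  moreover have "(\<lambda>n. (energy (maximizer r) - energy (s n)) / c) \<longlonglongrightarrow> (energy (maximizer r) - max_energy r) / c"
    using c by (intro tendsto_intros lim) simp
  then have "(\<lambda>n. (energy (maximizer r) - energy (s n)) / c) \<longlonglongrightarrow> 0"
    using max_energy_eq[OF r] by simp
  ultimately have "(\<lambda>n. (norm (s n - maximizer r))\<^sup>2) \<longlonglongrightarrow> 0"
    by (rule Lim_null_comparison[OF always_eventually])
  from tendsto_real_sqrt[OF this] have "(\<lambda>n. norm (s n - maximizer r)) \<longlonglongrightarrow> 0"
    by simp
  then have "(\<lambda>n. s n - maximizer r) \<longlonglongrightarrow> 0"
    by (rule tendsto_norm_zero_cancel)
  then show ?thesis by (simp add: LIM_zero_iff)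
qed

lemma maximizer_continuous: "continuous_on levels maximizer"
  unfolding maximizer_def
  by (rule continuous_on_compose2[OF sol_continuous multiplier_continuous]) (meson greaterThan_iff image_subsetI multiplier_gt)

lemma max_energy_supergradient:
  assumes r: "r \<in> levels" and s: "s \<in> levels"
  shows "max_energy s \<le> max_energy r + multiplier r * (s - r)"
    and "s \<noteq> r \<Longrightarrow> max_energy s < max_energy r + multiplier r * (s - r)"
proof -
  have gap: "max_energy s \<le> max_energy r + multiplier r * (s - r)
      - (multiplier r - onorm T) * (norm (maximizer s - maximizer r))\<^sup>2"
    using energy_gap[OF maximizer_eq[OF r], of "maximizer s"]
    by (simp add: max_energy_eq r s sqnorm_maximizer algebra_simps)
  moreover have "0 \<le> (multiplier r - onorm T) * (norm (maximizer s - maximizer r))\<^sup>2"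
    using multiplier_gt[OF r] by simp
  ultimately show "max_energy s \<le> max_energy r + multiplier r * (s - r)" by linarith
  assume "s \<noteq> r"
  then have "maximizer s \<noteq> maximizer r" using sqnorm_maximizer r s by metis
  then have "0 < (multiplier r - onorm T) * (norm (maximizer s - maximizer r))\<^sup>2"
    using multiplier_gt[OF r] by simp
  with gap show "max_energy s < max_energy r + multiplier r * (s - r)" by linarith
qed

lemma max_energy_has_derivative:
  assumes r: "r \<in> levels"
  shows "(max_energy has_real_derivative multiplier r) (at r)"
  unfolding has_field_derivative_iff
proof (rule tendsto_sandwich)
  have quotient_between:
    "min (multiplier s) (multiplier r) \<le> (max_energy s - max_energy r) / (s - r) \<and>
     (max_energy s - max_energy r) / (s - r) \<le> max (multiplier s) (multiplier r)"
    if s: "s \<in> levels" "s \<noteq> r" for s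
  proof -
    have lo: "multiplier s * (s - r) \<le> max_energy s - max_energy r"
      using max_energy_supergradient(1)[OF s(1) r] by (simp add: algebra_simps)
    have hi: "max_energy s - max_energy r \<le> multiplier r * (s - r)"
      using max_energy_supergradient(1)[OF r s(1)] by (simp add: algebra_simps)
    show ?thesis
    proof (cases "r < s")
      case True
      with lo hi show ?thesis by (simp add: field_simps min_le_iff_disj le_max_iff_disj)
    next
      case False
      with s(2) have "s - r < 0" by simp
      with lo hi show ?thesis by (simp add: field_simps min_le_iff_disj le_max_iff_disj)
    qed
  qed
  have "\<forall>\<^sub>F s in at r. s \<in> levels - {r}"
    by (rule eventually_at_in_open[OF open_levels r])
  then show "\<forall>\<^sub>F s in at r. min (multiplier s) (multiplier r) \<le> (max_energy s - max_energy r) / (s - r)"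
    and "\<forall>\<^sub>F s in at r. (max_energy s - max_energy r) / (s - r) \<le> max (multiplier s) (multiplier r)"
    by (eventually_elim, use quotient_between in blast)+
  have "(multiplier \<longlongrightarrow> multiplier r) (at r)"
    using multiplier_continuous open_levels r continuous_on_eq_continuous_at isCont_def by blast
  then show "((\<lambda>s. min (multiplier s) (multiplier r)) \<longlongrightarrow> multiplier r) (at r)"
    and "((\<lambda>s. max (multiplier s) (multiplier r)) \<longlongrightarrow> multiplier r) (at r)"
    by (auto intro: tendsto_eq_intros)
qed

lemma max_energy_strict_mono: "strict_mono_on levels max_energy"
proof (rule strict_mono_onI)
  fix r s assume r: "r \<in> levels" and s: "s \<in> levels" and "r < s"
  then have "0 < multiplier s * (s - r)"
    using multiplier_gt[OF s] onorm_nonneg by simp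
  then show "max_energy r < max_energy s"
    using max_energy_supergradient(1)[OF s r] by (simp add: algebra_simps)
qed

lemma max_energy_strictly_concave: "strictly_concave_on levels max_energy"
  unfolding strictly_concave_on_def
proof (intro ballI allI impI)
  fix x y t :: real assume x: "x \<in> levels" and y: "y \<in> levels" and xyt: "x \<noteq> y \<and> 0 < t \<and> t < 1"
  define m where "m = (1 - t) * x + t * y"
  have m: "m \<in> levels"
    using convexD[OF convex_levels x y, of "1 - t" t] xyt unfolding m_def by simp
  have "x - m = t * (x - y)" "y - m = (1 - t) * (y - x)"
    unfolding m_def by (simp_all add: algebra_simps)
  then have "x \<noteq> m" "y \<noteq> m"
    using xyt by auto
  then have "max_energy x < max_energy m + multiplier m * (x - m)"
    and "max_energy y < max_energy m + multiplier m * (y - m)"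
    using max_energy_supergradient(2)[OF m] x y by blast+
  then have "(1 - t) * max_energy x + t * max_energy y
      < (1 - t) * (max_energy m + multiplier m * (x - m)) + t * (max_energy m + multiplier m * (y - m))"
    using xyt by (intro add_strict_mono mult_strict_left_mono) auto
  also have "\<dots> = max_energy m"
    unfolding m_def by (simp add: algebra_simps)
  finally show "max_energy ((1 - t) * x + t * y) > (1 - t) * max_energy x + t * max_energy y"
    unfolding m_def .
qed

lemma sol_sqnorm_less_critical:
  assumes l: "onorm T < l" and x: "T x - onorm T *\<^sub>R x = z"
  shows "sol_sqnorm l < (norm x)\<^sup>2"
proof -
  have "(l - onorm T) *\<^sub>R x \<noteq> 0" using l solution_nonzero[OF x] by simp
  then have "x \<noteq> sol l"
    using sol_eq[OF l] x by (auto simp: algebra_simps)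
  then have "energy x - l * (norm x)\<^sup>2 < energy (sol l) - l * sol_sqnorm l"
    unfolding sol_sqnorm_def by (rule energy_gap_strict[OF sol_eq[OF l] l])
  moreover have "energy (sol l) - onorm T * sol_sqnorm l \<le> energy x - onorm T * (norm x)\<^sup>2"
    unfolding sol_sqnorm_def using energy_gap[OF x, of "sol l"] by simp
  ultimately have "(l - onorm T) * sol_sqnorm l < (l - onorm T) * (norm x)\<^sup>2"
    by (simp add: algebra_simps)
  then show ?thesis using l by simp
qed

end

locale compact_resolvent_family = resolvent_family +
  assumes compact: "compact_operator T"
begin

text \<open>Compactness makes \<open>v\<^sub>l = (T v\<^sub>l - z) / l\<close> converge along a subsequence as \<open>l \<down> \<parallel>T\<parallel> > 0\<close>;
  for \<open>T = 0\<close> the hypothesis fails, since then \<open>\<parallel>v\<^sub>l\<parallel> = \<parallel>z\<parallel> / l\<close>.\<close>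
lemma critical_solution_if_sol_sqnorm_bounded:
  assumes bound: "\<And>l. onorm T < l \<Longrightarrow> sol_sqnorm l \<le> r"
  obtains x where "T x - onorm T *\<^sub>R x = z" "(norm x)\<^sup>2 \<le> r"
proof (cases "onorm T = 0")
  case True
  then have T0: "T x = 0" for x using onorm_eq_0[OF bounded_linear] by simp
  have r: "0 < r" using sol_sqnorm_pos[of 1] bound[of 1] True by simp
  define l where "l = norm z / (2 * sqrt r)"
  have l: "0 < l" unfolding l_def using z_nonzero r by simp
  have "norm z = norm (T (sol l) - l *\<^sub>R sol l)"
    using sol_eq[of l] l True by simp
  also have "\<dots> = l * norm (sol l)"
    using T0 l by simp
  finally have "norm z = l * norm (sol l)" .
  then have "norm (sol l) = 2 * sqrt r"
    using l r unfolding l_def by (simp add: field_simps)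
  then have "sol_sqnorm l = 4 * r"
    unfolding sol_sqnorm_def using r by (simp add: power_mult_distrib)
  then show ?thesis using bound[of l] l r True by simp
next
  case False
  then have N: "0 < onorm T" using onorm_nonneg by simp
  define lam where "lam n = onorm T + inverse (real (Suc n))" for n
  define v where "v n = sol (lam n)" for n
  have lam: "onorm T < lam n" for n unfolding lam_def by simp
  have v_eq: "T (v n) - lam n *\<^sub>R v n = z" for n
    unfolding v_def using sol_eq[OF lam] .
  have v_bound: "(norm (v n))\<^sup>2 \<le> r" for n
    using bound[OF lam] unfolding v_def sol_sqnorm_def .
  then have "norm (v n) \<le> sqrt r" for n by (rule real_le_rsqrt)
  then have "bounded (range v)"
    unfolding bounded_iff by blast
  then obtain w \<sigma> where \<sigma>: "strict_mono \<sigma>" and Tv: "(\<lambda>k. T (v (\<sigma> k))) \<longlonglongrightarrow> w"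
    using compact_operator_convergent_subseq[OF compact] by blast
  have "lam \<longlonglongrightarrow> onorm T"
    unfolding lam_def using tendsto_add[OF tendsto_const LIMSEQ_inverse_real_of_nat] by simp
  then have lam_\<sigma>: "(\<lambda>k. lam (\<sigma> k)) \<longlonglongrightarrow> onorm T"
    using LIMSEQ_subseq_LIMSEQ[OF _ \<sigma>] by (simp add: comp_def)
  define x where "x = (1 / onorm T) *\<^sub>R (w - z)"
  have "v n = (1 / lam n) *\<^sub>R (T (v n) - z)" for n
    using v_eq[of n] lam[of n] onorm_nonneg by (auto simp: algebra_simps)
  moreover have "(\<lambda>k. (1 / lam (\<sigma> k)) *\<^sub>R (T (v (\<sigma> k)) - z)) \<longlonglongrightarrow> x"
    unfolding x_def using N by (intro tendsto_intros lam_\<sigma> Tv) simp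
  ultimately have vx: "(\<lambda>k. v (\<sigma> k)) \<longlonglongrightarrow> x" by simp
  have "(\<lambda>k. T (v (\<sigma> k)) - lam (\<sigma> k) *\<^sub>R v (\<sigma> k)) \<longlonglongrightarrow> T x - onorm T *\<^sub>R x"
    by (intro tendsto_intros bounded_linear.tendsto[OF bounded_linear] vx lam_\<sigma>)
  then have "T x - onorm T *\<^sub>R x = z"
    unfolding v_eq by (simp add: LIMSEQ_const_iff)
  moreover have "(norm x)\<^sup>2 \<le> r"
    using v_bound by (intro LIMSEQ_le_const2[OF tendsto_power[OF tendsto_norm[OF vx]]]) auto
  ultimately show ?thesis using that by blast
qed

definition theta :: ereal where
  "theta = (INF x\<in>{x. T x - onorm T *\<^sub>R x = z}. ereal ((norm x)\<^sup>2))"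

lemma less_theta_iff: "ereal r < theta \<longleftrightarrow> (\<exists>l>onorm T. r < sol_sqnorm l)"
proof
  assume "\<exists>l>onorm T. r < sol_sqnorm l"
  then obtain l where l: "onorm T < l" "r < sol_sqnorm l" by blast
  have "ereal (sol_sqnorm l) \<le> theta"
    unfolding theta_def using sol_sqnorm_less_critical[OF l(1)] by (intro INF_greatest) (simp add: less_imp_le)
  moreover have "ereal r < ereal (sol_sqnorm l)" using l(2) by simp
  ultimately show "ereal r < theta" by (rule less_le_trans[rotated])
next
  assume r: "ereal r < theta"
  show "\<exists>l>onorm T. r < sol_sqnorm l"
  proof (rule ccontr)
    assume none: "\<not> (\<exists>l>onorm T. r < sol_sqnorm l)"
    have "sol_sqnorm l \<le> r" if "onorm T < l" for l
      using none that not_less by blast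
    then obtain x where x: "T x - onorm T *\<^sub>R x = z" "(norm x)\<^sup>2 \<le> r"
      by (rule critical_solution_if_sol_sqnorm_bounded)
    then have "theta \<le> ereal r"
      unfolding theta_def by (intro INF_lower2[of x]) simp_all
    with r show False by simp
  qed
qed

lemma levels_eq_theta: "levels = {r. 0 < r \<and> ereal r < theta}"
  unfolding levels_eq less_theta_iff ..

end

theorem theorem1:
  fixes T :: "'a::{real_inner, complete_space} \<Rightarrow> 'a" and z :: 'a
  assumes "z \<noteq> 0"
    and "bounded_linear T"
    and "compact_operator T"
    and "symmetric_operator T"
  defines "vhat \<equiv> (\<lambda>l::real. THE x. T x - l *\<^sub>R x = z)"
    and "V \<equiv> {x. T x - onorm T *\<^sub>R x = z}"
  defines "\<theta> \<equiv> (INF x\<in>V. ereal ((norm x)\<^sup>2))"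
    and "S \<equiv> (\<lambda>r::real. {x. (norm x)\<^sup>2 = r})"
    and "g \<equiv> (\<lambda>l. (norm (vhat l))\<^sup>2)"
    and "J \<equiv> (\<lambda>x. inner (T x - 2 *\<^sub>R z) x)"
  defines "\<gamma> \<equiv> (\<lambda>r. Sup (J ` S r))"
    and "ginv \<equiv> inv_into {onorm T<..} g"
    and "I \<equiv> {r::real. 0 < r \<and> ereal r < \<theta>}"
  defines "xhat \<equiv> (\<lambda>r. vhat (ginv r))"
  shows
    "((\<forall>a b. onorm T < a \<and> a < b \<longrightarrow> g b < g a) \<and> g ` {onorm T<..} = I)
   \<and> (\<forall>r\<in>I. xhat r \<in> S r \<and> (\<forall>x\<in>S r. x \<noteq> xhat r \<longrightarrow> J x < J (xhat r)) \<and>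
      (\<forall>s. (\<forall>n. s n \<in> S r) \<and> (\<lambda>n. J (s n)) \<longlonglongrightarrow> \<gamma> r \<longrightarrow> s \<longlonglongrightarrow> xhat r))
   \<and> (continuous_on I xhat)
   \<and> ((\<exists>\<gamma>'. (\<forall>r\<in>I. (\<gamma> has_real_derivative \<gamma>' r) (at r)) \<and> continuous_on I \<gamma>')
      \<and> strict_mono_on I \<gamma> \<and> strictly_concave_on I \<gamma>)
   \<and> (\<forall>r\<in>I. T (xhat r) - deriv \<gamma> r *\<^sub>R xhat r = z)
   \<and> (\<forall>r\<in>I. deriv \<gamma> r = ginv r)"
proof -
  interpret compact_resolvent_family T z
    by (intro compact_resolvent_family.intro resolvent_family.intro
        compact_resolvent_family_axioms.intro assms(1-4))
  have vhat_eq: "vhat = sol" unfolding vhat_def by (simp add: fun_eq_iff sol_def)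
  have g_eq: "g = sol_sqnorm" unfolding g_def vhat_eq by (simp add: fun_eq_iff sol_sqnorm_def)
  have J_eq: "J = energy" unfolding J_def by (simp add: fun_eq_iff energy_def)
  have \<gamma>_eq: "\<gamma> = max_energy" unfolding \<gamma>_def S_def J_eq by (simp add: fun_eq_iff max_energy_def)
  have ginv_eq: "ginv = multiplier" unfolding ginv_def g_eq multiplier_def ..
  have xhat_eq: "xhat = maximizer" unfolding xhat_def vhat_eq ginv_eq by (simp add: fun_eq_iff maximizer_def)
  have I_eq: "I = levels" unfolding I_def \<theta>_def V_def levels_eq_theta theta_def ..
  have deriv_max_energy: "deriv max_energy r = multiplier r" if "r \<in> levels" for r
    by (rule DERIV_imp_deriv[OF max_energy_has_derivative[OF that]])
  show ?thesis
    unfolding g_eq J_eq \<gamma>_eq ginv_eq xhat_eq I_eq S_def mem_Collect_eq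
  proof (intro conjI ballI allI impI)
    show "\<exists>\<gamma>'. (\<forall>r\<in>levels. (max_energy has_real_derivative \<gamma>' r) (at r)) \<and> continuous_on levels \<gamma>'"
      using max_energy_has_derivative multiplier_continuous by blast
  qed (use sol_sqnorm_decreasing sqnorm_maximizer energy_less_maximizer maximizing_seq_tendsto
      maximizer_continuous max_energy_strict_mono max_energy_strictly_concave maximizer_eq deriv_max_energy in auto)
qed

end
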